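(* Let $(\mathcal{X},d)$ be a complete, separable, non-compact, locally compact length space and $p>1$. Let $(\mu_t)_{t\ge0}$ be a unit-speed ray in $P_p(\mathcal{X})$ and let $(\nu_t)_{t\ge0}$ be a co-ray from $\nu_0$ to $(\mu_t)_{t\ge0}$. Then (i) $b_\mu(\nu_{t_1})-b_\mu(\nu_{t_2})=t_2-t_1$ for all $t_1,t_2\ge0$; (ii) $b_\mu(\lambda)\le b_\nu(\lambda)+b_\mu(\nu_0)$ for every $\lambda\in P_p(\mathcal{X})$.
   Context: $P_p(\mathcal{X})$: Borel probability measures on $\mathcal{X}$ with finite $p$-th moment, with $W_p(\mu,\nu)=\big(\min_{\pi}\int d(x,y)^p\,d\pi\big)^{1/p}$ over couplings $\pi$ of $\mu,\nu$. A ray in a metric space $(\mathcal{Y},d)$ is a continuous $\gamma:[0,\infty)\to\mathcal{Y}$ with $d(\gamma_s,\gamma_t)=|s-t|\,d(\gamma_0,\gamma_1)$; unit-speed means $d(\gamma_0,\gamma_1)=1$. $T(\mu,\nu)$ ($\mu,\nu\in P_p(\mathcal{X})$, $L=W_p(\mu,\nu)$) is the set of curves $(\mu_t)_{0\le t\le L}$ with $\mu_0=\mu$, $\mu_L=\nu$, $W_p(\mu_s,\mu_t)=|s-t|$. Co-ray: a ray $(\nu_t)_{t\ge0}$ in $P_p(\mathcal{X})$ is a co-ray from $\nu_0$ to the unit-speed ray $(\mu_t)_{t\ge0}$ if there exist $t_n\to+\infty$, $\nu_0^n\in P_p(\mathcal{X})$ with $W_p(\nu_0^n,\nu_0)\to0$,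 and $(\nu^n_t)_{0\le t\le L_n}\in T(\nu_0^n,\mu_{t_n})$, $L_n=W_p(\nu_0^n,\mu_{t_n})$, with $W_p(\nu_t^n,\nu_t)\to0$ for every $t\ge0$. For a unit-speed ray $(\mu_t)_{t\ge0}$ in $P_p(\mathcal{X})$, the Busemann function is $b_\mu(\lambda)=\lim_{t\to+\infty}[W_p(\lambda,\mu_t)-t]$, $\lambda\in P_p(\mathcal{X})$ (the limit exists and is finite); $b_\nu$ is defined likewise from the ray $(\nu_t)_{t\ge0}$. *)

theory Defs
  imports "HOL-Probability.Probability"
begin

definition curve_length :: "(real \<Rightarrow> 'a::metric_space) \<Rightarrow> real \<Rightarrow> real \<Rightarrow> ereal" where
  "curve_length g a b =
     (SUP (n, t) \<in> {(n::nat, t::nat \<Rightarrow> real). t 0 = a \<and> t n = b \<and> (\<forall>i<n. t i \<le> t (Suc i))}.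
        ereal (\<Sum>i<n. dist (g (t i)) (g (t (Suc i)))))"

definition length_space :: "'a::metric_space itself \<Rightarrow> bool" where
  "length_space _ \<longleftrightarrow>
     (\<forall>x y::'a. \<forall>e>0. \<exists>g. continuous_on {0..1} g \<and> g 0 = x \<and> g 1 = y \<and>
        curve_length g 0 1 < ereal (dist x y + e))"

definition Pp :: "real \<Rightarrow> 'a::metric_space measure set" where
  "Pp p = {\<mu>. prob_space \<mu> \<and> sets \<mu> = sets borel \<and>
              (\<exists>x0. integrable \<mu> (\<lambda>x. dist x0 x powr p))}"

definition couplings :: "'a::metric_space measure \<Rightarrow> 'a measure \<Rightarrow> ('a \<times> 'a) measure set" where
  "couplings \<mu> \<nu> = {\<pi>. prob_space \<pi> \<and> sets \<pi> = sets (borel \<Otimes>\<^sub>M borel) \<and>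
                       distr \<pi> borel fst = \<mu> \<and> distr \<pi> borel snd = \<nu>}"

definition Wp :: "real \<Rightarrow> 'a::metric_space measure \<Rightarrow> 'a measure \<Rightarrow> real" where
  "Wp p \<mu> \<nu> = (INF \<pi> \<in> couplings \<mu> \<nu>. \<integral>z. dist (fst z) (snd z) powr p \<partial>\<pi>) powr (1 / p)"

definition is_ray :: "real \<Rightarrow> (real \<Rightarrow> 'a::metric_space measure) \<Rightarrow> bool" where
  "is_ray p g \<longleftrightarrow> (\<forall>t\<ge>0. g t \<in> Pp p) \<and>
     (\<forall>t\<ge>0. ((\<lambda>s. Wp p (g s) (g t)) \<longlongrightarrow> 0) (at t within {0..})) \<and>
     (\<forall>s\<ge>0. \<forall>t\<ge>0. Wp p (g s) (g t) = \<bar>s - t\<bar> * Wp p (g 0) (g 1))"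

definition unit_ray :: "real \<Rightarrow> (real \<Rightarrow> 'a::metric_space measure) \<Rightarrow> bool" where
  "unit_ray p g \<longleftrightarrow> is_ray p g \<and> Wp p (g 0) (g 1) = 1"

definition geod_set :: "real \<Rightarrow> 'a::metric_space measure \<Rightarrow> 'a measure \<Rightarrow> (real \<Rightarrow> 'a measure) set" where
  "geod_set p \<mu> \<nu> = {g. (\<forall>t\<in>{0..Wp p \<mu> \<nu>}. g t \<in> Pp p) \<and> g 0 = \<mu> \<and> g (Wp p \<mu> \<nu>) = \<nu> \<and>
       (\<forall>s\<in>{0..Wp p \<mu> \<nu>}. \<forall>t\<in>{0..Wp p \<mu> \<nu>}. Wp p (g s) (g t) = \<bar>s - t\<bar>)}"

definition is_coray :: "real \<Rightarrow> (real \<Rightarrow> 'a::metric_space measure) \<Rightarrow> (real \<Rightarrow> 'a measure) \<Rightarrow> bool" where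
  "is_coray p \<nu> \<mu> \<longleftrightarrow> is_ray p \<nu> \<and>
     (\<exists>(tn :: nat \<Rightarrow> real) (\<nu>0n :: nat \<Rightarrow> 'a measure) (\<nu>n :: nat \<Rightarrow> real \<Rightarrow> 'a measure).
        filterlim tn at_top sequentially \<and>
        (\<forall>n. \<nu>0n n \<in> Pp p) \<and>
        (\<lambda>n. Wp p (\<nu>0n n) (\<nu> 0)) \<longlonglongrightarrow> 0 \<and>
        (\<forall>n. \<nu>n n \<in> geod_set p (\<nu>0n n) (\<mu> (tn n))) \<and>
        (\<forall>t\<ge>0. (\<lambda>n. Wp p (\<nu>n n t) (\<nu> t)) \<longlonglongrightarrow> 0))"

definition busemann :: "real \<Rightarrow> (real \<Rightarrow> 'a::metric_space measure) \<Rightarrow> 'a measure \<Rightarrow> real" where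
  "busemann p \<mu> \<rho> = Lim at_top (\<lambda>t. Wp p \<rho> (\<mu> t) - t)"

end

theory Submission
  imports Defs
begin

(* W_p is a pseudometric on P_p. Symmetry comes from swapping couplings; for the triangle
   inequality the middle marginal is quantised into countably many cells of small diameter, both
   couplings are conditioned on the cells, the conditional laws are coupled independently on each
   cell, and Minkowski's inequality bounds the cost of the resulting coupling.

   Along a unit-speed ray, t -> W_p(lambda, mu_t) - t is then non-increasing and bounded below,
   so b_mu exists and is 1-Lipschitz. The approximating geodesics of the co-ray run from nu_0^n
   to mu_(t_n), so W_p(nu_t, mu_(t_n)) - t_n <= W_p(nu_0, mu_(t_n)) - t_n - t + o(1), giving
   b_mu(nu_t) <= b_mu(nu_0) - t. The Lipschitz bound and the speed bound W_p(nu_0, nu_1) <= 1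
   give the reverse inequality and force nu to have unit speed; (ii) follows by letting t tend
   to infinity in b_mu(lambda) <= (W_p(lambda, nu_t) - t) + b_mu(nu_0). *)

section \<open>Minkowski's inequality\<close>

lemma powr_add_le_weighted:
  fixes u v t p :: real
  assumes p: "p \<ge> 1" and t: "0 < t" "t < 1" and u: "u \<ge> 0" and v: "v \<ge> 0"
  shows "(u + v) powr p \<le> t powr (1 - p) * u powr p + (1 - t) powr (1 - p) * v powr p"
proof -
  have weight_ge_1: "s powr (1 - p) \<ge> 1" if "0 < s" "s \<le> 1" for s :: real
    using powr_mono2'[of "1 - p" s 1] that p by simp
  consider "u = 0" | "v = 0" | "u > 0" "v > 0" using u v by linarith
  then show ?thesis
  proof cases
    case 1
    then show ?thesis using weight_ge_1[of "1 - t"] t by (simp add: mult_le_cancel_right1)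
  next
    case 2
    then show ?thesis using weight_ge_1[of t] t by (simp add: mult_le_cancel_right1)
  next
    case 3
    have "(u + v) powr p = ((1 - t) *\<^sub>R (v / (1 - t)) + t *\<^sub>R (u / t)) powr p"
      using t by (simp add: add.commute)
    also have "\<dots> \<le> (1 - t) * (v / (1 - t)) powr p + t * (u / t) powr p"
      by (rule convex_onD[OF powr_convex[OF p]]) (use t 3 in auto)
    also have "(1 - t) * (v / (1 - t)) powr p = (1 - t) powr (1 - p) * v powr p"
      using t 3 by (simp add: powr_divide powr_diff divide_simps)
    also have "t * (u / t) powr p = t powr (1 - p) * u powr p"
      using t 3 by (simp add: powr_divide powr_diff divide_simps)
    finally show ?thesis by simp
  qed
qed

lemma powr_add_le_two_powr:
  fixes u v p :: real
  assumes "p \<ge> 1" "u \<ge> 0" "v \<ge> 0"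
  shows "(u + v) powr p \<le> 2 powr (p - 1) * (u powr p + v powr p)"
proof -
  have half: "(1/2::real) powr (1 - p) = 2 powr (p - 1)"
    by (simp add: powr_divide powr_minus_divide[symmetric] powr_minus)
  show ?thesis
    using powr_add_le_weighted[of p "1/2" u v] assms by (simp add: half algebra_simps)
qed

lemma dist_powr_triangle:
  fixes x y z :: "'a::metric_space"
  assumes "p \<ge> 1"
  shows "dist x z powr p \<le> 2 powr (p - 1) * (dist x y powr p + dist y z powr p)"
proof -
  have "dist x z powr p \<le> (dist x y + dist y z) powr p"
    using assms by (intro powr_mono2) (auto intro: dist_triangle)
  also have "\<dots> \<le> 2 powr (p - 1) * (dist x y powr p + dist y z powr p)"
    by (rule powr_add_le_two_powr) (use assms in auto)
  finally show ?thesis .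
qed

lemma le_of_weighted_bounds:
  fixes X A p :: real
  assumes bound: "\<And>s. 0 < s \<Longrightarrow> s < 1 \<Longrightarrow> X \<le> s powr (1 - p) * A"
  shows "X \<le> A"
proof (rule tendsto_le[OF trivial_limit_at_left_real])
  have "((\<lambda>s. s powr (1 - p)) \<longlongrightarrow> 1) (at_left 1)"
    by (rule tendsto_eq_intros refl | simp)+
  then show "((\<lambda>s. s powr (1 - p) * A) \<longlongrightarrow> A) (at_left 1)"
    using tendsto_mult_right[of _ 1 _ A] by simp
  have "\<forall>\<^sub>F s in at_left 1. s \<in> {0<..<1::real}"
    by (rule eventually_at_left_real) simp
  then show "\<forall>\<^sub>F s in at_left 1. X \<le> s powr (1 - p) * A"
    by eventually_elim (use bound in auto)
qed simp

text \<open>The bound is used at its minimiser \<open>t = a / (a + b)\<close>, where \<open>a = A powr (1/p)\<close> and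
  \<open>b = B powr (1/p)\<close>.\<close>
lemma powr_inverse_le_of_weighted_bounds:
  fixes X A B p :: real
  assumes p: "p \<ge> 1" and nonneg: "X \<ge> 0" "A \<ge> 0" "B \<ge> 0"
    and bound: "\<And>t. 0 < t \<Longrightarrow> t < 1 \<Longrightarrow> X \<le> t powr (1 - p) * A + (1 - t) powr (1 - p) * B"
  shows "X powr (1/p) \<le> A powr (1/p) + B powr (1/p)"
proof -
  consider "A = 0" | "B = 0" | "A > 0" "B > 0" using nonneg by linarith
  then show ?thesis
  proof cases
    case 1
    have "X \<le> B" by (rule le_of_weighted_bounds) (use bound[of "1 - s" for s] 1 in auto)
    then show ?thesis using 1 p nonneg by (simp add: powr_mono2)
  next
    case 2
    have "X \<le> A" by (rule le_of_weighted_bounds) (use bound 2 in auto)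
    then show ?thesis using 2 p nonneg by (simp add: powr_mono2)
  next
    case 3
    define a b where "a = A powr (1/p)" and "b = B powr (1/p)"
    have ab: "a > 0" "b > 0" "A = a powr p" "B = b powr p"
      using 3 p by (auto simp: a_def b_def powr_powr)
    define t where "t = a / (a + b)"
    have t: "0 < t" "t < 1" "1 - t = b / (a + b)"
      using ab unfolding t_def by (auto simp: field_simps)
    have optimum: "s powr (1 - p) * c powr p = c * (a + b) powr (p - 1)"
      if "s = c / (a + b)" "c > 0" for s c
    proof -
      have "s powr (1 - p) * c powr p = (c powr (1 - p) * c powr p) / (a + b) powr (1 - p)"
        using that ab(1,2) by (simp add: powr_divide)
      also have "c powr (1 - p) * c powr p = c"
        using that(2) by (simp add: powr_add[symmetric])
      also have "c / (a + b) powr (1 - p) = c * (a + b) powr (p - 1)"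
        by (simp add: divide_inverse powr_minus[symmetric])
      finally show ?thesis .
    qed
    have "X \<le> a * (a + b) powr (p - 1) + b * (a + b) powr (p - 1)"
      using bound[OF t(1,2)] optimum[OF t_def ab(1)] optimum[OF t(3) ab(2)] ab(3,4) by simp
    also have "\<dots> = (a + b) powr p"
      using ab by (simp add: distrib_right[symmetric] powr_add[symmetric] powr_mult_base)
    finally have "X powr (1/p) \<le> ((a + b) powr p) powr (1/p)"
      using p nonneg by (intro powr_mono2) auto
    also have "\<dots> = a + b" using ab p by (simp add: powr_powr)
    finally show ?thesis unfolding a_def b_def .
  qed
qed

lemma Minkowski_powr:
  fixes f g :: "'b \<Rightarrow> real"
  assumes p: "p \<ge> 1"
    and [measurable]: "f \<in> borel_measurable M" "g \<in> borel_measurable M"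
    and nonneg: "\<And>x. f x \<ge> 0" "\<And>x. g x \<ge> 0"
    and f_int: "integrable M (\<lambda>x. f x powr p)" and g_int: "integrable M (\<lambda>x. g x powr p)"
  shows "integrable M (\<lambda>x. (f x + g x) powr p)"
    and "(\<integral>x. (f x + g x) powr p \<partial>M) powr (1/p)
           \<le> (\<integral>x. f x powr p \<partial>M) powr (1/p) + (\<integral>x. g x powr p \<partial>M) powr (1/p)"
proof -
  let ?bound = "\<lambda>t x. t powr (1 - p) * f x powr p + (1 - t) powr (1 - p) * g x powr p"
  have pointwise: "(f x + g x) powr p \<le> ?bound t x" if "0 < t" "t < 1" for t x
    using powr_add_le_weighted[OF p that nonneg] .
  show int: "integrable M (\<lambda>x. (f x + g x) powr p)"
  proof (rule Bochner_Integration.integrable_bound)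
    show "integrable M (?bound (1/2))" using f_int g_int by auto
    show "AE x in M. norm ((f x + g x) powr p) \<le> norm (?bound (1/2) x)"
      using pointwise[of "1/2"] by (auto intro!: order_trans[OF _ abs_ge_self])
  qed measurable
  show "(\<integral>x. (f x + g x) powr p \<partial>M) powr (1/p)
          \<le> (\<integral>x. f x powr p \<partial>M) powr (1/p) + (\<integral>x. g x powr p \<partial>M) powr (1/p)"
  proof (rule powr_inverse_le_of_weighted_bounds[OF p])
    fix t :: real assume t: "0 < t" "t < 1"
    have "(\<integral>x. (f x + g x) powr p \<partial>M) \<le> (\<integral>x. ?bound t x \<partial>M)"
      using int f_int g_int pointwise[OF t] by (intro integral_mono) auto
    then show "(\<integral>x. (f x + g x) powr p \<partial>M)
        \<le> t powr (1 - p) * (\<integral>x. f x powr p \<partial>M) + (1 - t) powr (1 - p) * (\<integral>x. g x powr p \<partial>M)"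
      using f_int g_int by simp
  qed (auto intro!: integral_nonneg_AE)
qed

lemma Minkowski_powr_add_const:
  fixes f g :: "'b \<Rightarrow> real"
  assumes M: "prob_space M" and p: "p \<ge> 1" and \<delta>: "\<delta> \<ge> 0"
    and [measurable]: "f \<in> borel_measurable M" "g \<in> borel_measurable M"
    and nonneg: "\<And>x. f x \<ge> 0" "\<And>x. g x \<ge> 0"
    and f_int: "integrable M (\<lambda>x. f x powr p)" and g_int: "integrable M (\<lambda>x. g x powr p)"
  shows "integrable M (\<lambda>x. (f x + (g x + \<delta>)) powr p)"
    and "(\<integral>x. (f x + (g x + \<delta>)) powr p \<partial>M) powr (1/p)
           \<le> (\<integral>x. f x powr p \<partial>M) powr (1/p) + (\<integral>x. g x powr p \<partial>M) powr (1/p) + \<delta>"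
proof -
  interpret prob_space M by (rule M)
  have "(\<integral>x. \<delta> powr p \<partial>M) powr (1/p) = \<delta>"
    using p \<delta> by (simp add: powr_powr prob_space)
  then have g\<delta>: "integrable M (\<lambda>x. (g x + \<delta>) powr p)"
    "(\<integral>x. (g x + \<delta>) powr p \<partial>M) powr (1/p) \<le> (\<integral>x. g x powr p \<partial>M) powr (1/p) + \<delta>"
    using Minkowski_powr[OF p _ borel_measurable_const nonneg(2) \<delta> g_int integrable_const] by simp_all
  have "g x + \<delta> \<ge> 0" for x using nonneg(2) \<delta> by (simp add: add_nonneg_nonneg)
  note f_g\<delta> = Minkowski_powr[OF p _ _ nonneg(1) this f_int g\<delta>(1)]
  show "integrable M (\<lambda>x. (f x + (g x + \<delta>)) powr p)" by (rule f_g\<delta>(1)) simp_all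
  show "(\<integral>x. (f x + (g x + \<delta>)) powr p \<partial>M) powr (1/p)
      \<le> (\<integral>x. f x powr p \<partial>M) powr (1/p) + (\<integral>x. g x powr p \<partial>M) powr (1/p) + \<delta>"
    using f_g\<delta>(2) g\<delta>(2) by simp
qed

section \<open>Couplings and transport cost\<close>

lemma PpD:
  assumes "\<mu> \<in> Pp p"
  shows "prob_space \<mu>" "sets \<mu> = sets borel"
  using assms unfolding Pp_def by simp_all

lemma integrable_dist_powr_Pp:
  fixes \<mu> :: "'a::{metric_space, second_countable_topology} measure"
  assumes \<mu>: "\<mu> \<in> Pp p" and p: "p \<ge> 1"
  shows "integrable \<mu> (\<lambda>x. dist x0 x powr p)"
proof -
  obtain x1 where x1: "integrable \<mu> (\<lambda>x. dist x1 x powr p)"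
    using \<mu> unfolding Pp_def by auto
  interpret prob_space \<mu> using PpD(1)[OF \<mu>] .
  note [measurable_cong] = PpD(2)[OF \<mu>]
  show ?thesis
  proof (rule Bochner_Integration.integrable_bound)
    show "integrable \<mu> (\<lambda>x. 2 powr (p - 1) * (dist x0 x1 powr p + dist x1 x powr p))"
      using x1 by simp
    show "AE x in \<mu>. norm (dist x0 x powr p) \<le> norm (2 powr (p - 1) * (dist x0 x1 powr p + dist x1 x powr p))"
      using dist_powr_triangle[OF p] by (auto intro!: AE_I2 simp del: powr_add)
  qed measurable
qed

definition transport_cost :: "real \<Rightarrow> ('a::metric_space \<times> 'a) measure \<Rightarrow> real" where
  "transport_cost p \<pi> = (\<integral>z. dist (fst z) (snd z) powr p \<partial>\<pi>)"

lemma transport_cost_nonneg: "transport_cost p \<pi> \<ge> 0"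
  unfolding transport_cost_def by (auto intro!: integral_nonneg_AE)

lemma transport_cost_distr:
  fixes h :: "'b \<Rightarrow> 'a::{metric_space, second_countable_topology} \<times> 'a"
  assumes h: "h \<in> \<Gamma> \<rightarrow>\<^sub>M borel \<Otimes>\<^sub>M borel"
  shows "transport_cost p (distr \<Gamma> (borel \<Otimes>\<^sub>M borel) h) = (\<integral>w. dist (fst (h w)) (snd (h w)) powr p \<partial>\<Gamma>)"
    and "integrable (distr \<Gamma> (borel \<Otimes>\<^sub>M borel) h) (\<lambda>z. dist (fst z) (snd z) powr p)
      \<longleftrightarrow> integrable \<Gamma> (\<lambda>w. dist (fst (h w)) (snd (h w)) powr p)"
proof -
  have "(\<lambda>z::'a \<times> 'a. dist (fst z) (snd z) powr p) \<in> borel_measurable (borel \<Otimes>\<^sub>M borel)"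
    by measurable
  then show "transport_cost p (distr \<Gamma> (borel \<Otimes>\<^sub>M borel) h) = (\<integral>w. dist (fst (h w)) (snd (h w)) powr p \<partial>\<Gamma>)"
    and "integrable (distr \<Gamma> (borel \<Otimes>\<^sub>M borel) h) (\<lambda>z. dist (fst z) (snd z) powr p)
      \<longleftrightarrow> integrable \<Gamma> (\<lambda>w. dist (fst (h w)) (snd (h w)) powr p)"
    unfolding transport_cost_def using h by (simp_all add: integral_distr integrable_distr_eq)
qed

lemma couplingsD:
  assumes "\<pi> \<in> couplings a b"
  shows "prob_space \<pi>" "sets \<pi> = sets (borel \<Otimes>\<^sub>M borel)"
    "distr \<pi> borel fst = a" "distr \<pi> borel snd = b"
  using assms unfolding couplings_def by simp_all

lemma integrable_transport_cost:
  fixes \<pi> :: "('a::{metric_space, second_countable_topology} \<times> 'a) measure"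
  assumes \<pi>: "\<pi> \<in> couplings a b" and a: "a \<in> Pp p" and b: "b \<in> Pp p" and p: "p \<ge> 1"
  shows "integrable \<pi> (\<lambda>z. dist (fst z) (snd z) powr p)"
proof -
  fix x0 :: 'a
  note [measurable_cong] = couplingsD(2)[OF \<pi>]
  have "integrable \<pi> (\<lambda>z. dist x0 (fst z) powr p)"
    using integrable_dist_powr_Pp[OF a p] couplingsD(3)[OF \<pi>]
    by (subst integrable_distr_eq[symmetric, where N = borel]) auto
  moreover have "integrable \<pi> (\<lambda>z. dist x0 (snd z) powr p)"
    using integrable_dist_powr_Pp[OF b p] couplingsD(4)[OF \<pi>]
    by (subst integrable_distr_eq[symmetric, where N = borel]) auto
  ultimately have "integrable \<pi> (\<lambda>z. 2 powr (p - 1) * (dist (fst z) x0 powr p + dist x0 (snd z) powr p))"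
    by (simp add: dist_commute)
  then show ?thesis
  proof (rule Bochner_Integration.integrable_bound)
    show "AE z in \<pi>. norm (dist (fst z) (snd z) powr p)
        \<le> norm (2 powr (p - 1) * (dist (fst z) x0 powr p + dist x0 (snd z) powr p))"
      using dist_powr_triangle[OF p] by (auto intro!: AE_I2 simp del: powr_add)
  qed measurable
qed

lemma (in prob_space) distr_pair_snd:
  assumes "prob_space N"
  shows "distr (M \<Otimes>\<^sub>M N) N snd = N"
proof (rule measure_eqI)
  interpret N: prob_space N by (rule assms)
  fix X assume "X \<in> sets (distr (M \<Otimes>\<^sub>M N) N snd)"
  then have X: "X \<in> sets N" by simp
  have "emeasure (distr (M \<Otimes>\<^sub>M N) N snd) X = emeasure (M \<Otimes>\<^sub>M N) (snd -` X \<inter> space (M \<Otimes>\<^sub>M N))"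
    by (rule emeasure_distr[OF measurable_snd X])
  also have "snd -` X \<inter> space (M \<Otimes>\<^sub>M N) = space M \<times> X"
    using sets.sets_into_space[OF X] by (auto simp: space_pair_measure)
  also have "emeasure (M \<Otimes>\<^sub>M N) (space M \<times> X) = emeasure N X"
    using N.emeasure_pair_measure_Times[OF sets.top[of M] X] by (simp add: emeasure_space_1)
  finally show "emeasure (distr (M \<Otimes>\<^sub>M N) N snd) X = emeasure N X" .
qed simp

lemma pair_measure_in_couplings:
  fixes a b :: "'a::{metric_space, second_countable_topology} measure"
  assumes a: "a \<in> Pp p" and b: "b \<in> Pp p"
  shows "a \<Otimes>\<^sub>M b \<in> couplings a b"
proof -
  interpret a: prob_space a using PpD(1)[OF a] .
  interpret b: prob_space b using PpD(1)[OF b] .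
  have "distr (a \<Otimes>\<^sub>M b) borel fst = distr (a \<Otimes>\<^sub>M b) a fst"
    by (rule distr_cong) (auto simp: PpD(2)[OF a])
  moreover have "distr (a \<Otimes>\<^sub>M b) borel snd = distr (a \<Otimes>\<^sub>M b) b snd"
    by (rule distr_cong) (auto simp: PpD(2)[OF b])
  ultimately show ?thesis
    unfolding couplings_def mem_Collect_eq
    using b.distr_pair_fst a.distr_pair_snd[OF b.prob_space_axioms]
      prob_space_pair[OF a.prob_space_axioms b.prob_space_axioms]
      sets_pair_measure_cong[OF PpD(2)[OF a] PpD(2)[OF b]]
    by (intro conjI) simp_all
qed

section \<open>Conditioning on a countable partition\<close>

text \<open>On a null cell the conditional law is irrelevant; \<open>\<pi>\<close> itself is used there.\<close>
definition cell_conditional :: "'c measure \<Rightarrow> ('c \<Rightarrow> nat) \<Rightarrow> nat \<Rightarrow> 'c measure" where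
  "cell_conditional \<pi> \<phi> i =
     (let F = {w \<in> space \<pi>. \<phi> w = i} in if emeasure \<pi> F = 0 then \<pi> else uniform_measure \<pi> F)"

lemma cell_conditional_measurable:
  assumes \<pi>: "prob_space \<pi>" and \<phi>: "\<phi> \<in> \<pi> \<rightarrow>\<^sub>M count_space UNIV"
  shows "cell_conditional \<pi> \<phi> \<in> count_space UNIV \<rightarrow>\<^sub>M prob_algebra \<pi>"
proof -
  interpret prob_space \<pi> by (rule \<pi>)
  have "prob_space (cell_conditional \<pi> \<phi> i)" for i
  proof (cases "emeasure \<pi> {w \<in> space \<pi>. \<phi> w = i} = 0")
    case False
    have "{w \<in> space \<pi>. \<phi> w = i} \<in> sets \<pi>" using \<phi> by measurable
    with False show ?thesis
      by (simp add: cell_conditional_def prob_space_uniform_measure emeasure_finite)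
  qed (simp add: cell_conditional_def \<pi>)
  moreover have "sets (cell_conditional \<pi> \<phi> i) = sets \<pi>" for i
    by (simp add: cell_conditional_def Let_def)
  ultimately show ?thesis
    by (simp add: space_prob_algebra)
qed

lemma AE_cell_conditional:
  assumes \<phi>: "\<phi> \<in> \<pi> \<rightarrow>\<^sub>M count_space UNIV" and non_null: "emeasure \<pi> {w \<in> space \<pi>. \<phi> w = i} \<noteq> 0"
  shows "AE w in cell_conditional \<pi> \<phi> i. \<phi> w = i"
proof -
  have "{w \<in> space \<pi>. \<phi> w = i} \<in> sets \<pi>" using \<phi> by measurable
  then have "AE w in uniform_measure \<pi> {w \<in> space \<pi>. \<phi> w = i}. \<phi> w = i"
    by (rule AE_uniform_measureI) simp
  moreover have "cell_conditional \<pi> \<phi> i = uniform_measure \<pi> {w \<in> space \<pi>. \<phi> w = i}"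
    using non_null by (simp add: cell_conditional_def Let_def)
  ultimately show ?thesis by (simp only:)
qed

lemma AE_cell_non_null:
  fixes N :: "'b \<Rightarrow> nat"
  assumes h: "h \<in> \<pi> \<rightarrow>\<^sub>M M" and N: "N \<in> M \<rightarrow>\<^sub>M count_space UNIV"
  shows "AE y in distr \<pi> M h. emeasure \<pi> {w \<in> space \<pi>. N (h w) = N y} \<noteq> 0"
proof -
  let ?F = "\<lambda>i. {w \<in> space \<pi>. N (h w) = i}"
  have "AE w in \<pi>. emeasure \<pi> (?F i) = 0 \<longrightarrow> N (h w) \<noteq> i" for i
  proof (cases "emeasure \<pi> (?F i) = 0")
    case True
    have "?F i \<in> sets \<pi>" using h N by measurable
    with True have "?F i \<in> null_sets \<pi>" by (simp add: null_sets_def)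
    then show ?thesis by (rule AE_I') auto
  qed simp
  then have "AE w in \<pi>. \<forall>i. emeasure \<pi> (?F i) = 0 \<longrightarrow> N (h w) \<noteq> i"
    by (subst AE_all_countable) blast
  then have "AE w in \<pi>. emeasure \<pi> (?F (N (h w))) \<noteq> 0"
    by eventually_elim auto
  moreover have "{y \<in> space M. emeasure \<pi> (?F (N y)) \<noteq> 0} \<in> sets M"
    using measurable_sets[OF N, of "{i. emeasure \<pi> (?F i) \<noteq> 0}"] by (simp add: vimage_def Int_def conj_commute)
  ultimately show ?thesis by (simp add: AE_distr_iff[OF h])
qed

lemma nn_integral_nat_valued:
  fixes N :: "'a \<Rightarrow> nat"
  assumes N: "N \<in> M \<rightarrow>\<^sub>M count_space UNIV"
  shows "(\<integral>\<^sup>+w. g (N w) \<partial>M) = (\<Sum>i. g i * emeasure M {w \<in> space M. N w = i})"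
proof -
  let ?A = "\<lambda>i. {w \<in> space M. N w = i}"
  have A: "?A i \<in> sets M" for i using N by measurable
  have disj: "disjoint_family ?A" by (auto simp: disjoint_family_on_def)
  have "(\<integral>\<^sup>+w. g (N w) \<partial>M) = (\<integral>\<^sup>+w. (\<Sum>i. g i * indicator (?A i) w) \<partial>M)"
  proof (intro nn_integral_cong)
    fix w assume "w \<in> space M"
    then have "w \<in> ?A (N w)" by simp
    then show "g (N w) = (\<Sum>i. g i * indicator (?A i) w)"
      by (rule suminf_cmult_indicator[OF disj, symmetric])
  qed
  also have "\<dots> = (\<Sum>i. \<integral>\<^sup>+w. g i * indicator (?A i) w \<partial>M)"
    by (rule nn_integral_suminf) (use A in auto)
  also have "\<dots> = (\<Sum>i. g i * emeasure M (?A i))"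
    using A by (simp add: nn_integral_cmult_indicator)
  finally show ?thesis .
qed

lemma emeasure_cell_conditional_mult:
  assumes \<pi>: "prob_space \<pi>" and \<phi>: "\<phi> \<in> \<pi> \<rightarrow>\<^sub>M count_space UNIV" and A: "A \<in> sets \<pi>"
  shows "emeasure (cell_conditional \<pi> \<phi> i) A * emeasure \<pi> {w \<in> space \<pi>. \<phi> w = i}
    = emeasure \<pi> ({w \<in> space \<pi>. \<phi> w = i} \<inter> A)"
proof -
  interpret prob_space \<pi> by (rule \<pi>)
  let ?F = "{w \<in> space \<pi>. \<phi> w = i}"
  have F: "?F \<in> sets \<pi>" using \<phi> by measurable
  show ?thesis
  proof (cases "emeasure \<pi> ?F = 0")
    case True
    then show ?thesis using emeasure_mono[of "?F \<inter> A" ?F \<pi>] F by simp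
  next
    case False
    then have "emeasure (cell_conditional \<pi> \<phi> i) A = emeasure \<pi> (?F \<inter> A) / emeasure \<pi> ?F"
      using F A by (simp add: cell_conditional_def)
    moreover have "emeasure \<pi> ?F < top" by (simp add: less_top[symmetric])
    ultimately show ?thesis using False
      by (simp add: ennreal_divide_times ennreal_mult_divide_eq)
  qed
qed

lemma bind_cell_conditional:
  assumes \<pi>: "prob_space \<pi>" and \<phi>: "\<phi> \<in> \<pi> \<rightarrow>\<^sub>M count_space UNIV"
  shows "distr \<pi> (count_space UNIV) \<phi> \<bind> cell_conditional \<pi> \<phi> = \<pi>"
proof -
  interpret prob_space \<pi> by (rule \<pi>)
  let ?K = "cell_conditional \<pi> \<phi>" and ?F = "\<lambda>i. {w \<in> space \<pi>. \<phi> w = i}"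
  have K: "?K \<in> count_space UNIV \<rightarrow>\<^sub>M prob_algebra \<pi>"
    by (rule cell_conditional_measurable[OF \<pi> \<phi>])
  have F: "?F i \<in> sets \<pi>" for i using \<phi> by measurable
  have law: "distr \<pi> (count_space UNIV) \<phi> \<in> space (prob_algebra (count_space UNIV))"
    using \<phi> by (auto simp: space_prob_algebra intro!: prob_space_distr)
  show ?thesis
  proof (rule measure_eqI)
    show "sets (distr \<pi> (count_space UNIV) \<phi> \<bind> ?K) = sets \<pi>" by (rule sets_bind'[OF law K])
    fix A assume "A \<in> sets (distr \<pi> (count_space UNIV) \<phi> \<bind> ?K)"
    then have A: "A \<in> sets \<pi>" using sets_bind'[OF law K] by simp
    have "emeasure (distr \<pi> (count_space UNIV) \<phi> \<bind> ?K) A = (\<integral>\<^sup>+w. emeasure (?K (\<phi> w)) A \<partial>\<pi>)"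
      using emeasure_bind_prob_algebra[OF law K A] \<phi> by (simp add: nn_integral_distr)
    also have "\<dots> = (\<Sum>i. emeasure (?K i) A * emeasure \<pi> (?F i))"
      by (rule nn_integral_nat_valued[OF \<phi>])
    also have "\<dots> = (\<Sum>i. emeasure \<pi> (?F i \<inter> A))"
      using emeasure_cell_conditional_mult[OF \<pi> \<phi> A] by simp
    also have "\<dots> = emeasure \<pi> (\<Union>i. ?F i \<inter> A)"
      by (rule suminf_emeasure) (use F A in \<open>auto simp: disjoint_family_on_def\<close>)
    also have "(\<Union>i. ?F i \<inter> A) = A" using sets.sets_into_space[OF A] by auto
    finally show "emeasure (distr \<pi> (count_space UNIV) \<phi> \<bind> ?K) A = emeasure \<pi> A" .
  qed
qed

lemma bind_cell_conditional_distr: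
  fixes N :: "'b \<Rightarrow> nat"
  assumes \<pi>: "prob_space \<pi>" and h: "h \<in> \<pi> \<rightarrow>\<^sub>M M" and N: "N \<in> M \<rightarrow>\<^sub>M count_space UNIV"
  shows "distr \<pi> M h \<bind> (\<lambda>y. cell_conditional \<pi> (\<lambda>w. N (h w)) (N y)) = \<pi>"
proof -
  let ?K = "cell_conditional \<pi> (\<lambda>w. N (h w))"
  have Nh: "(\<lambda>w. N (h w)) \<in> \<pi> \<rightarrow>\<^sub>M count_space UNIV" using h N by measurable
  have "space (distr \<pi> M h) \<noteq> {}"
    using prob_space.not_empty[OF \<pi>] measurable_space[OF h] by auto
  then have "distr \<pi> M h \<bind> (\<lambda>y. ?K (N y)) = distr (distr \<pi> M h) (count_space UNIV) N \<bind> ?K"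
    using N measurable_prob_algebraD[OF cell_conditional_measurable[OF \<pi> Nh]]
    by (intro bind_distr[symmetric]) simp_all
  also have "distr (distr \<pi> M h) (count_space UNIV) N = distr \<pi> (count_space UNIV) (\<lambda>w. N (h w))"
    using h N by (simp add: distr_distr comp_def)
  finally show ?thesis using bind_cell_conditional[OF \<pi> Nh] by simp
qed

section \<open>Approximate gluing and the triangle inequality\<close>

lemma (in prob_space) AE_pair_measure_fst_snd:
  assumes N: "prob_space N" and P: "AE x in M. P x" and Q: "AE y in N. Q y"
  shows "AE w in M \<Otimes>\<^sub>M N. P (fst w) \<and> Q (snd w)"
proof -
  have "AE x in distr (M \<Otimes>\<^sub>M N) M fst. P x"
    by (subst prob_space.distr_pair_fst[OF N]) (rule P)
  then have "AE w in M \<Otimes>\<^sub>M N. P (fst w)" by (rule AE_distrD[OF measurable_fst])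
  have "AE y in distr (M \<Otimes>\<^sub>M N) N snd. Q y"
    by (subst distr_pair_snd[OF N]) (rule Q)
  then have "AE w in M \<Otimes>\<^sub>M N. Q (snd w)" by (rule AE_distrD[OF measurable_snd])
  with \<open>AE w in M \<Otimes>\<^sub>M N. P (fst w)\<close> show ?thesis by eventually_elim simp
qed

lemma distr_bind_pair_fst:
  assumes K1: "K1 \<in> B \<rightarrow>\<^sub>M prob_algebra M1" and K2: "K2 \<in> B \<rightarrow>\<^sub>M prob_algebra M2"
    and B: "space B \<noteq> {}"
  shows "distr (B \<bind> (\<lambda>y. K1 y \<Otimes>\<^sub>M K2 y)) M1 fst = B \<bind> K1"
proof -
  have "distr (B \<bind> (\<lambda>y. K1 y \<Otimes>\<^sub>M K2 y)) M1 fst = B \<bind> (\<lambda>y. distr (K1 y \<Otimes>\<^sub>M K2 y) M1 fst)"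
    by (rule distr_bind[OF measurable_prob_algebraD[OF measurable_pair_prob[OF K1 K2]] B]) simp
  also have "\<dots> = B \<bind> K1"
  proof (rule bind_cong[OF refl])
    fix y assume "y \<in> space B"
    then have "sets (K1 y) = sets M1" "prob_space (K2 y)"
      using measurable_space[OF K1] measurable_space[OF K2] by (auto simp: space_prob_algebra)
    have "distr (K1 y \<Otimes>\<^sub>M K2 y) M1 fst = distr (K1 y \<Otimes>\<^sub>M K2 y) (K1 y) fst"
      by (rule distr_cong) (simp_all add: \<open>sets (K1 y) = sets M1\<close>)
    also have "\<dots> = K1 y" by (rule prob_space.distr_pair_fst[OF \<open>prob_space (K2 y)\<close>])
    finally show "distr (K1 y \<Otimes>\<^sub>M K2 y) M1 fst = K1 y" .
  qed
  finally show ?thesis .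
qed

lemma distr_bind_pair_snd:
  assumes K1: "K1 \<in> B \<rightarrow>\<^sub>M prob_algebra M1" and K2: "K2 \<in> B \<rightarrow>\<^sub>M prob_algebra M2"
    and B: "space B \<noteq> {}"
  shows "distr (B \<bind> (\<lambda>y. K1 y \<Otimes>\<^sub>M K2 y)) M2 snd = B \<bind> K2"
proof -
  have "distr (B \<bind> (\<lambda>y. K1 y \<Otimes>\<^sub>M K2 y)) M2 snd = B \<bind> (\<lambda>y. distr (K1 y \<Otimes>\<^sub>M K2 y) M2 snd)"
    by (rule distr_bind[OF measurable_prob_algebraD[OF measurable_pair_prob[OF K1 K2]] B]) simp
  also have "\<dots> = B \<bind> K2"
  proof (rule bind_cong[OF refl])
    fix y assume "y \<in> space B"
    then have "prob_space (K1 y)" "prob_space (K2 y)" "sets (K2 y) = sets M2"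
      using measurable_space[OF K1] measurable_space[OF K2] by (auto simp: space_prob_algebra)
    have "distr (K1 y \<Otimes>\<^sub>M K2 y) M2 snd = distr (K1 y \<Otimes>\<^sub>M K2 y) (K2 y) snd"
      by (rule distr_cong) (simp_all add: \<open>sets (K2 y) = sets M2\<close>)
    also have "\<dots> = K2 y"
      by (rule prob_space.distr_pair_snd[OF \<open>prob_space (K1 y)\<close> \<open>prob_space (K2 y)\<close>])
    finally show "distr (K1 y \<Otimes>\<^sub>M K2 y) M2 snd = K2 y" .
  qed
  finally show ?thesis .
qed

lemma borel_quantizer:
  fixes r :: real assumes r: "r > 0"
  obtains N :: "'a::{metric_space, second_countable_topology} \<Rightarrow> nat" and q :: "nat \<Rightarrow> 'a"
  where "N \<in> borel \<rightarrow>\<^sub>M count_space UNIV" "\<And>y. dist y (q (N y)) < r"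
proof -
  obtain D :: "'a set" where D: "countable D" "\<And>X. open X \<Longrightarrow> X \<noteq> {} \<Longrightarrow> \<exists>d\<in>D. d \<in> X"
    using countable_dense_exists by blast
  define q where "q = from_nat_into D"
  have near: "\<exists>i. dist y (q i) < r" for y
  proof -
    obtain d where d: "d \<in> D" "d \<in> ball y r" using D(2)[of "ball y r"] r by auto
    then have "q (to_nat_on D d) = d" using D(1) unfolding q_def by (simp add: from_nat_into_to_nat_on)
    then show ?thesis using d(2) by (metis mem_ball)
  qed
  define N where "N y = (LEAST i. dist y (q i) < r)" for y
  have "N \<in> borel \<rightarrow>\<^sub>M count_space UNIV" unfolding N_def by measurable
  moreover have "dist y (q (N y)) < r" for y unfolding N_def using near[of y] by (rule LeastI_ex)
  ultimately show ?thesis using that by blast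
qed

text \<open>Both couplings are conditioned on the cells of a quantisation \<open>N\<close> of the middle marginal
  and combined independently on each cell. The two middle points then agree only up to the cell
  diameter, which suffices for the triangle inequality and avoids the disintegration theorem.\<close>
definition cell_gluing :: "('a::metric_space \<Rightarrow> nat) \<Rightarrow> ('a \<times> 'a) measure \<Rightarrow> ('a \<times> 'a) measure
    \<Rightarrow> (('a \<times> 'a) \<times> ('a \<times> 'a)) measure" where
  "cell_gluing N \<pi>1 \<pi>2 = distr \<pi>1 borel snd \<bind>
     (\<lambda>y. cell_conditional \<pi>1 (\<lambda>w. N (snd w)) (N y) \<Otimes>\<^sub>M cell_conditional \<pi>2 (\<lambda>w. N (fst w)) (N y))"

lemma cell_gluing_kernels:
  fixes \<pi>1 \<pi>2 :: "('a::{metric_space, second_countable_topology} \<times> 'a) measure"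
    and N :: "'a \<Rightarrow> nat"
  assumes \<pi>1: "\<pi>1 \<in> couplings a b" and \<pi>2: "\<pi>2 \<in> couplings b c"
    and N: "N \<in> borel \<rightarrow>\<^sub>M count_space UNIV"
  shows "b \<in> space (prob_algebra b)"
    and "(\<lambda>y. cell_conditional \<pi>1 (\<lambda>w. N (snd w)) (N y)) \<in> b \<rightarrow>\<^sub>M prob_algebra \<pi>1"
    and "(\<lambda>y. cell_conditional \<pi>2 (\<lambda>w. N (fst w)) (N y)) \<in> b \<rightarrow>\<^sub>M prob_algebra \<pi>2"
    and "cell_gluing N \<pi>1 \<pi>2 = b \<bind>
      (\<lambda>y. cell_conditional \<pi>1 (\<lambda>w. N (snd w)) (N y) \<Otimes>\<^sub>M cell_conditional \<pi>2 (\<lambda>w. N (fst w)) (N y))"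
proof -
  note \<pi>1D = couplingsD[OF \<pi>1] and \<pi>2D = couplingsD[OF \<pi>2]
  note [measurable_cong] = \<pi>1D(2) \<pi>2D(2)
  have snd_\<pi>1: "snd \<in> \<pi>1 \<rightarrow>\<^sub>M borel" by measurable
  show "b \<in> space (prob_algebra b)"
    using prob_space.prob_space_distr[OF \<pi>1D(1) snd_\<pi>1] \<pi>1D(4) by (simp add: space_prob_algebra)
  have Nb: "N \<in> b \<rightarrow>\<^sub>M count_space UNIV" using N \<pi>1D(4)[symmetric] by simp
  have "(\<lambda>w. N (snd w)) \<in> \<pi>1 \<rightarrow>\<^sub>M count_space UNIV" "(\<lambda>w. N (fst w)) \<in> \<pi>2 \<rightarrow>\<^sub>M count_space UNIV"
    using N by simp_all
  then show "(\<lambda>y. cell_conditional \<pi>1 (\<lambda>w. N (snd w)) (N y)) \<in> b \<rightarrow>\<^sub>M prob_algebra \<pi>1"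
    and "(\<lambda>y. cell_conditional \<pi>2 (\<lambda>w. N (fst w)) (N y)) \<in> b \<rightarrow>\<^sub>M prob_algebra \<pi>2"
    by (auto intro: measurable_compose[OF Nb] cell_conditional_measurable \<pi>1D(1) \<pi>2D(1))
  show "cell_gluing N \<pi>1 \<pi>2 = b \<bind>
      (\<lambda>y. cell_conditional \<pi>1 (\<lambda>w. N (snd w)) (N y) \<Otimes>\<^sub>M cell_conditional \<pi>2 (\<lambda>w. N (fst w)) (N y))"
    unfolding cell_gluing_def \<pi>1D(4) ..
qed

lemma prob_space_cell_gluing:
  fixes \<pi>1 \<pi>2 :: "('a::{metric_space, second_countable_topology} \<times> 'a) measure"
  assumes \<pi>1: "\<pi>1 \<in> couplings a b" and \<pi>2: "\<pi>2 \<in> couplings b c"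
    and N: "N \<in> borel \<rightarrow>\<^sub>M count_space UNIV"
  shows "prob_space (cell_gluing N \<pi>1 \<pi>2)"
    and "sets (cell_gluing N \<pi>1 \<pi>2) = sets ((borel \<Otimes>\<^sub>M borel) \<Otimes>\<^sub>M (borel \<Otimes>\<^sub>M borel))"
proof -
  note K = cell_gluing_kernels[OF \<pi>1 \<pi>2 N]
  note KK = measurable_pair_prob[OF K(2,3)]
  show "prob_space (cell_gluing N \<pi>1 \<pi>2)"
    unfolding K(4) by (rule prob_space_bind'[OF K(1) KK])
  show "sets (cell_gluing N \<pi>1 \<pi>2) = sets ((borel \<Otimes>\<^sub>M borel) \<Otimes>\<^sub>M (borel \<Otimes>\<^sub>M borel))"
    unfolding K(4) sets_bind'[OF K(1) KK]
    by (rule sets_pair_measure_cong[OF couplingsD(2)[OF \<pi>1] couplingsD(2)[OF \<pi>2]])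
qed

lemma cell_gluing_marginals:
  fixes \<pi>1 \<pi>2 :: "('a::{metric_space, second_countable_topology} \<times> 'a) measure"
  assumes \<pi>1: "\<pi>1 \<in> couplings a b" and \<pi>2: "\<pi>2 \<in> couplings b c"
    and N: "N \<in> borel \<rightarrow>\<^sub>M count_space UNIV"
  shows "distr (cell_gluing N \<pi>1 \<pi>2) (borel \<Otimes>\<^sub>M borel) fst = \<pi>1"
    and "distr (cell_gluing N \<pi>1 \<pi>2) (borel \<Otimes>\<^sub>M borel) snd = \<pi>2"
proof -
  note \<pi>1D = couplingsD[OF \<pi>1] and \<pi>2D = couplingsD[OF \<pi>2]
  note [measurable_cong] = \<pi>1D(2) \<pi>2D(2)
  note K = cell_gluing_kernels[OF \<pi>1 \<pi>2 N]
  have b_nonempty: "space b \<noteq> {}" using \<pi>1D(4)[symmetric] by simp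
  have snd_\<pi>1: "snd \<in> \<pi>1 \<rightarrow>\<^sub>M borel" by measurable
  have fst_\<pi>2: "fst \<in> \<pi>2 \<rightarrow>\<^sub>M borel" by measurable
  have "distr (cell_gluing N \<pi>1 \<pi>2) (borel \<Otimes>\<^sub>M borel) fst = distr (cell_gluing N \<pi>1 \<pi>2) \<pi>1 fst"
    by (rule distr_cong) (simp_all add: \<pi>1D(2))
  also have "\<dots> = \<pi>1"
    unfolding K(4) distr_bind_pair_fst[OF K(2,3) b_nonempty]
    using bind_cell_conditional_distr[OF \<pi>1D(1) snd_\<pi>1 N] \<pi>1D(4) by simp
  finally show "distr (cell_gluing N \<pi>1 \<pi>2) (borel \<Otimes>\<^sub>M borel) fst = \<pi>1" .
  have "distr (cell_gluing N \<pi>1 \<pi>2) (borel \<Otimes>\<^sub>M borel) snd = distr (cell_gluing N \<pi>1 \<pi>2) \<pi>2 snd"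
    by (rule distr_cong) (simp_all add: \<pi>2D(2))
  also have "\<dots> = \<pi>2"
    unfolding K(4) distr_bind_pair_snd[OF K(2,3) b_nonempty]
    using bind_cell_conditional_distr[OF \<pi>2D(1) fst_\<pi>2 N] \<pi>2D(3) by simp
  finally show "distr (cell_gluing N \<pi>1 \<pi>2) (borel \<Otimes>\<^sub>M borel) snd = \<pi>2" .
qed

lemma AE_cell_gluing_same_cell:
  fixes \<pi>1 \<pi>2 :: "('a::{metric_space, second_countable_topology} \<times> 'a) measure"
    and N :: "'a \<Rightarrow> nat"
  assumes \<pi>1: "\<pi>1 \<in> couplings a b" and \<pi>2: "\<pi>2 \<in> couplings b c"
    and N[measurable]: "N \<in> borel \<rightarrow>\<^sub>M count_space UNIV"
  shows "AE w in cell_gluing N \<pi>1 \<pi>2. N (snd (fst w)) = N (fst (snd w))"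
proof -
  note \<pi>1D = couplingsD[OF \<pi>1] and \<pi>2D = couplingsD[OF \<pi>2]
  note [measurable_cong] = \<pi>1D(2) \<pi>2D(2)
  note K = cell_gluing_kernels[OF \<pi>1 \<pi>2 N]
  define K1 where "K1 = cell_conditional \<pi>1 (\<lambda>w. N (snd w))"
  define K2 where "K2 = cell_conditional \<pi>2 (\<lambda>w. N (fst w))"
  have snd_\<pi>1: "snd \<in> \<pi>1 \<rightarrow>\<^sub>M borel" by measurable
  have fst_\<pi>2: "fst \<in> \<pi>2 \<rightarrow>\<^sub>M borel" by measurable
  have "AE y in b. AE w in K1 (N y) \<Otimes>\<^sub>M K2 (N y). N (snd (fst w)) = N (fst (snd w))"
    using AE_cell_non_null[OF snd_\<pi>1 N] AE_cell_non_null[OF fst_\<pi>2 N]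
    unfolding \<pi>1D(4) \<pi>2D(3)
  proof eventually_elim
    case (elim y)
    have "prob_space (K1 (N y))" "prob_space (K2 (N y))"
      using measurable_space[OF K(2), of y] measurable_space[OF K(3), of y] \<pi>1D(4)[symmetric]
      by (auto simp: space_prob_algebra K1_def K2_def)
    moreover have "AE w in K1 (N y). N (snd w) = N y"
      unfolding K1_def using elim by (intro AE_cell_conditional) simp_all
    moreover have "AE w in K2 (N y). N (fst w) = N y"
      unfolding K2_def using elim by (intro AE_cell_conditional) simp_all
    ultimately have "AE w in K1 (N y) \<Otimes>\<^sub>M K2 (N y). N (snd (fst w)) = N y \<and> N (fst (snd w)) = N y"
      by (intro prob_space.AE_pair_measure_fst_snd)
    then show ?case by eventually_elim simp
  qed
  moreover have "Measurable.pred (\<pi>1 \<Otimes>\<^sub>M \<pi>2) (\<lambda>w. N (snd (fst w)) = N (fst (snd w)))"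
  proof -
    note [measurable_cong] = sets_pair_measure_cong[OF \<pi>1D(2) \<pi>2D(2)]
    have via_cells: "(\<lambda>w. N (snd (fst w)) = N (fst (snd w)))
        = (\<lambda>w. \<exists>i. N (snd (fst w)) = i \<and> N (fst (snd w)) = i)"
      by auto
    show ?thesis unfolding via_cells by measurable
  qed
  ultimately show ?thesis
    unfolding K(4) K1_def K2_def
    by (subst AE_bind[OF measurable_prob_algebraD[OF measurable_pair_prob[OF K(2,3)]]])
qed

lemma transport_cost_glued_le:
  fixes \<Gamma> :: "(('a::{metric_space, second_countable_topology} \<times> 'a) \<times> ('a \<times> 'a)) measure"
  assumes \<Gamma>: "prob_space \<Gamma>" and sets_\<Gamma>: "sets \<Gamma> = sets ((borel \<Otimes>\<^sub>M borel) \<Otimes>\<^sub>M (borel \<Otimes>\<^sub>M borel))"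
    and fst_\<Gamma>: "distr \<Gamma> (borel \<Otimes>\<^sub>M borel) fst = \<pi>1"
    and snd_\<Gamma>: "distr \<Gamma> (borel \<Otimes>\<^sub>M borel) snd = \<pi>2"
    and int1: "integrable \<pi>1 (\<lambda>z. dist (fst z) (snd z) powr p)"
    and int2: "integrable \<pi>2 (\<lambda>z. dist (fst z) (snd z) powr p)"
    and p: "p \<ge> 1" and \<delta>: "\<delta> \<ge> 0"
    and close: "AE w in \<Gamma>. dist (snd (fst w)) (fst (snd w)) \<le> \<delta>"
  shows "transport_cost p (distr \<Gamma> (borel \<Otimes>\<^sub>M borel) (\<lambda>w. (fst (fst w), snd (snd w)))) powr (1/p)
           \<le> transport_cost p \<pi>1 powr (1/p) + transport_cost p \<pi>2 powr (1/p) + \<delta>"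
proof -
  note [measurable_cong] = sets_\<Gamma>
  have fst_m: "fst \<in> \<Gamma> \<rightarrow>\<^sub>M borel \<Otimes>\<^sub>M borel" by measurable
  have snd_m: "snd \<in> \<Gamma> \<rightarrow>\<^sub>M borel \<Otimes>\<^sub>M borel" by measurable
  have outer_m: "(\<lambda>w. (fst (fst w), snd (snd w))) \<in> \<Gamma> \<rightarrow>\<^sub>M borel \<Otimes>\<^sub>M borel" by measurable
  note leg1 = transport_cost_distr[OF fst_m, of p, unfolded fst_\<Gamma>]
  note leg2 = transport_cost_distr[OF snd_m, of p, unfolded snd_\<Gamma>]
  have leg1_m: "(\<lambda>w. dist (fst (fst w)) (snd (fst w))) \<in> borel_measurable \<Gamma>" by measurable
  have leg2_m: "(\<lambda>w. dist (fst (snd w)) (snd (snd w))) \<in> borel_measurable \<Gamma>" by measurable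
  have leg1_int: "integrable \<Gamma> (\<lambda>w. dist (fst (fst w)) (snd (fst w)) powr p)"
    using leg1(2) int1 by simp
  have leg2_int: "integrable \<Gamma> (\<lambda>w. dist (fst (snd w)) (snd (snd w)) powr p)"
    using leg2(2) int2 by simp
  note bound = Minkowski_powr_add_const[OF \<Gamma> p \<delta> leg1_m leg2_m zero_le_dist zero_le_dist leg1_int leg2_int]
  note int = bound(1)
  have outer_le: "AE w in \<Gamma>. dist (fst (fst w)) (snd (snd w)) powr p
      \<le> (dist (fst (fst w)) (snd (fst w)) + (dist (fst (snd w)) (snd (snd w)) + \<delta>)) powr p"
    using close
  proof eventually_elim
    case (elim w)
    have "dist (fst (fst w)) (snd (snd w))
        \<le> dist (fst (fst w)) (snd (fst w)) + dist (snd (fst w)) (fst (snd w)) + dist (fst (snd w)) (snd (snd w))"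
      using dist_triangle[of "fst (fst w)" "snd (snd w)" "snd (fst w)"]
        dist_triangle[of "snd (fst w)" "snd (snd w)" "fst (snd w)"] by linarith
    then show ?case using elim p by (intro powr_mono2) auto
  qed
  have "transport_cost p (distr \<Gamma> (borel \<Otimes>\<^sub>M borel) (\<lambda>w. (fst (fst w), snd (snd w))))
      \<le> (\<integral>w. (dist (fst (fst w)) (snd (fst w)) + (dist (fst (snd w)) (snd (snd w)) + \<delta>)) powr p \<partial>\<Gamma>)"
    unfolding transport_cost_distr(1)[OF outer_m] fst_conv snd_conv
  proof (rule integral_mono_AE[OF _ int outer_le])
    show "integrable \<Gamma> (\<lambda>w. dist (fst (fst w)) (snd (snd w)) powr p)"
      by (rule Bochner_Integration.integrable_bound[OF int]) (use outer_le in \<open>auto elim!: eventually_mono\<close>)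
  qed
  then have "transport_cost p (distr \<Gamma> (borel \<Otimes>\<^sub>M borel) (\<lambda>w. (fst (fst w), snd (snd w)))) powr (1/p)
      \<le> (\<integral>w. (dist (fst (fst w)) (snd (fst w)) + (dist (fst (snd w)) (snd (snd w)) + \<delta>)) powr p \<partial>\<Gamma>) powr (1/p)"
    using p by (intro powr_mono2) (auto simp: transport_cost_nonneg)
  with bound(2) show ?thesis unfolding leg1(1) leg2(1) by simp
qed

lemma glued_in_couplings:
  fixes \<Gamma> :: "(('a::{metric_space, second_countable_topology} \<times> 'a) \<times> ('a \<times> 'a)) measure"
  assumes \<Gamma>: "prob_space \<Gamma>" and sets_\<Gamma>: "sets \<Gamma> = sets ((borel \<Otimes>\<^sub>M borel) \<Otimes>\<^sub>M (borel \<Otimes>\<^sub>M borel))"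
    and fst_\<Gamma>: "distr \<Gamma> (borel \<Otimes>\<^sub>M borel) fst = \<pi>1"
    and snd_\<Gamma>: "distr \<Gamma> (borel \<Otimes>\<^sub>M borel) snd = \<pi>2"
    and \<pi>1: "\<pi>1 \<in> couplings a b" and \<pi>2: "\<pi>2 \<in> couplings b' c"
  shows "distr \<Gamma> (borel \<Otimes>\<^sub>M borel) (\<lambda>w. (fst (fst w), snd (snd w))) \<in> couplings a c"
proof -
  note [measurable_cong] = sets_\<Gamma>
  let ?outer = "\<lambda>w. (fst (fst w), snd (snd w))"
  have outer_m: "?outer \<in> \<Gamma> \<rightarrow>\<^sub>M borel \<Otimes>\<^sub>M borel" by measurable
  have fst_m: "fst \<in> \<Gamma> \<rightarrow>\<^sub>M borel \<Otimes>\<^sub>M borel" by measurable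
  have snd_m: "snd \<in> \<Gamma> \<rightarrow>\<^sub>M borel \<Otimes>\<^sub>M borel" by measurable
  have "distr (distr \<Gamma> (borel \<Otimes>\<^sub>M borel) ?outer) borel fst = distr \<Gamma> borel (\<lambda>w. fst (fst w))"
    using outer_m by (simp add: distr_distr comp_def)
  also have "\<dots> = distr (distr \<Gamma> (borel \<Otimes>\<^sub>M borel) fst) borel fst"
    using fst_m by (simp add: distr_distr comp_def)
  finally have "distr (distr \<Gamma> (borel \<Otimes>\<^sub>M borel) ?outer) borel fst = a"
    using fst_\<Gamma> couplingsD(3)[OF \<pi>1] by simp
  moreover have "distr (distr \<Gamma> (borel \<Otimes>\<^sub>M borel) ?outer) borel snd = distr \<Gamma> borel (\<lambda>w. snd (snd w))"
    using outer_m by (simp add: distr_distr comp_def)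
  moreover have "\<dots> = distr (distr \<Gamma> (borel \<Otimes>\<^sub>M borel) snd) borel snd"
    using snd_m by (simp add: distr_distr comp_def)
  ultimately show ?thesis
    using snd_\<Gamma> couplingsD(4)[OF \<pi>2] prob_space.prob_space_distr[OF \<Gamma> outer_m]
    by (simp add: couplings_def)
qed

lemma exists_coupling_transport_cost_le:
  fixes a b c :: "'a::{metric_space, second_countable_topology} measure"
  assumes a: "a \<in> Pp p" and b: "b \<in> Pp p" and c: "c \<in> Pp p" and p: "p \<ge> 1"
    and \<pi>1: "\<pi>1 \<in> couplings a b" and \<pi>2: "\<pi>2 \<in> couplings b c" and r: "r > 0"
  shows "\<exists>\<gamma>\<in>couplings a c.
           transport_cost p \<gamma> powr (1/p) \<le> transport_cost p \<pi>1 powr (1/p) + transport_cost p \<pi>2 powr (1/p) + r"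
proof -
  obtain N :: "'a \<Rightarrow> nat" and q where N: "N \<in> borel \<rightarrow>\<^sub>M count_space UNIV"
    and near: "\<And>y. dist y (q (N y)) < r / 2"
    using borel_quantizer[of "r / 2"] r by auto
  let ?\<Gamma> = "cell_gluing N \<pi>1 \<pi>2"
  note \<Gamma> = prob_space_cell_gluing[OF \<pi>1 \<pi>2 N] cell_gluing_marginals[OF \<pi>1 \<pi>2 N]
  have "AE w in ?\<Gamma>. dist (snd (fst w)) (fst (snd w)) \<le> r"
    using AE_cell_gluing_same_cell[OF \<pi>1 \<pi>2 N]
  proof eventually_elim
    case (elim w)
    then show ?case
      using dist_triangle[of "snd (fst w)" "fst (snd w)" "q (N (snd (fst w)))"]
        near[of "snd (fst w)"] near[of "fst (snd w)"] by (simp add: dist_commute)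
  qed
  then have "transport_cost p (distr ?\<Gamma> (borel \<Otimes>\<^sub>M borel) (\<lambda>w. (fst (fst w), snd (snd w)))) powr (1/p)
      \<le> transport_cost p \<pi>1 powr (1/p) + transport_cost p \<pi>2 powr (1/p) + r"
    using r by (intro transport_cost_glued_le[OF \<Gamma> integrable_transport_cost[OF \<pi>1 a b p]
        integrable_transport_cost[OF \<pi>2 b c p] p]) simp_all
  then show ?thesis using glued_in_couplings[OF \<Gamma> \<pi>1 \<pi>2] by blast
qed

lemma Wp_nonneg: "Wp p a b \<ge> 0"
  unfolding Wp_def by simp

lemma Wp_eq_INF_transport_cost: "Wp p a b = (INF \<pi> \<in> couplings a b. transport_cost p \<pi>) powr (1 / p)"
  unfolding Wp_def transport_cost_def ..

lemma Wp_le_transport_cost: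
  fixes a b :: "'a::{metric_space, second_countable_topology} measure"
  assumes "a \<in> Pp p" "b \<in> Pp p" "p > 0" "\<pi> \<in> couplings a b"
  shows "Wp p a b \<le> transport_cost p \<pi> powr (1/p)"
proof -
  have "bdd_below (transport_cost p ` couplings a b)"
    by (rule bdd_belowI[of _ 0]) (auto simp: transport_cost_nonneg)
  then have "(INF \<pi>\<in>couplings a b. transport_cost p \<pi>) \<le> transport_cost p \<pi>"
    by (rule cINF_lower) fact
  moreover have "(INF \<pi>\<in>couplings a b. transport_cost p \<pi>) \<ge> 0"
    using pair_measure_in_couplings[OF assms(1,2)]
    by (intro cINF_greatest) (auto simp: transport_cost_nonneg)
  ultimately show ?thesis
    unfolding Wp_eq_INF_transport_cost using assms(3) by (intro powr_mono2) auto
qed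

lemma Wp_greatest:
  fixes a b :: "'a::{metric_space, second_countable_topology} measure"
  assumes "a \<in> Pp p" "b \<in> Pp p" "p > 0"
    and le: "\<And>\<pi>. \<pi> \<in> couplings a b \<Longrightarrow> s \<le> transport_cost p \<pi> powr (1/p)"
  shows "s \<le> Wp p a b"
proof (cases "s \<le> 0")
  case True
  then show ?thesis using Wp_nonneg[of p a b] by linarith
next
  case False
  have "s powr p \<le> transport_cost p \<pi>" if "\<pi> \<in> couplings a b" for \<pi>
  proof -
    have "s powr p \<le> (transport_cost p \<pi> powr (1/p)) powr p"
      using le[OF that] False assms(3) by (intro powr_mono2) auto
    also have "\<dots> = transport_cost p \<pi>"
      using assms(3) transport_cost_nonneg[of p \<pi>] by (simp add: powr_powr)
    finally show ?thesis .
  qed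
  then have "s powr p \<le> (INF \<pi>\<in>couplings a b. transport_cost p \<pi>)"
    using pair_measure_in_couplings[OF assms(1,2)] by (intro cINF_greatest) auto
  then have "(s powr p) powr (1/p) \<le> Wp p a b"
    unfolding Wp_eq_INF_transport_cost using assms(3) by (intro powr_mono2) auto
  then show ?thesis using False assms(3) by (simp add: powr_powr)
qed

lemma swap_in_couplings:
  fixes \<pi> :: "('a::{metric_space, second_countable_topology} \<times> 'a) measure"
  assumes "\<pi> \<in> couplings a b"
  shows "distr \<pi> (borel \<Otimes>\<^sub>M borel) (\<lambda>z. (snd z, fst z)) \<in> couplings b a"
    and "transport_cost p (distr \<pi> (borel \<Otimes>\<^sub>M borel) (\<lambda>z. (snd z, fst z))) = transport_cost p \<pi>"
proof -
  note \<pi>D = couplingsD[OF assms]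
  note [measurable_cong] = \<pi>D(2)
  have swap_m: "(\<lambda>z. (snd z, fst z)) \<in> \<pi> \<rightarrow>\<^sub>M borel \<Otimes>\<^sub>M borel" by measurable
  have "prob_space (distr \<pi> (borel \<Otimes>\<^sub>M borel) (\<lambda>z. (snd z, fst z)))"
    by (rule prob_space.prob_space_distr[OF \<pi>D(1) swap_m])
  moreover have "distr (distr \<pi> (borel \<Otimes>\<^sub>M borel) (\<lambda>z. (snd z, fst z))) borel fst = b"
    using swap_m \<pi>D(4) by (simp add: distr_distr comp_def)
  moreover have "distr (distr \<pi> (borel \<Otimes>\<^sub>M borel) (\<lambda>z. (snd z, fst z))) borel snd = a"
    using swap_m \<pi>D(3) by (simp add: distr_distr comp_def)
  ultimately show "distr \<pi> (borel \<Otimes>\<^sub>M borel) (\<lambda>z. (snd z, fst z)) \<in> couplings b a"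
    unfolding couplings_def by simp
  have "(\<lambda>z::'a \<times> 'a. dist (fst z) (snd z) powr p) \<in> borel_measurable (borel \<Otimes>\<^sub>M borel)"
    by measurable
  then show "transport_cost p (distr \<pi> (borel \<Otimes>\<^sub>M borel) (\<lambda>z. (snd z, fst z))) = transport_cost p \<pi>"
    unfolding transport_cost_def by (subst integral_distr[OF swap_m]) (simp_all add: dist_commute)
qed

lemma Wp_commute:
  fixes a b :: "'a::{metric_space, second_countable_topology} measure"
  assumes "a \<in> Pp p" "b \<in> Pp p" "p > 0"
  shows "Wp p a b = Wp p b a"
proof -
  have "Wp p x y \<le> Wp p y x" if "x \<in> Pp p" "y \<in> Pp p" for x y :: "'a measure"
  proof (rule Wp_greatest[OF that(2,1) assms(3)])
    fix \<pi> assume "\<pi> \<in> couplings y x"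
    then show "Wp p x y \<le> transport_cost p \<pi> powr (1/p)"
      using Wp_le_transport_cost[OF that assms(3) swap_in_couplings(1)] swap_in_couplings(2) by metis
  qed
  then show ?thesis using assms by (simp add: order_antisym)
qed

lemma Wp_triangle:
  fixes a b c :: "'a::{metric_space, second_countable_topology} measure"
  assumes a: "a \<in> Pp p" and b: "b \<in> Pp p" and c: "c \<in> Pp p" and p: "p \<ge> 1"
  shows "Wp p a c \<le> Wp p a b + Wp p b c"
proof (rule field_le_epsilon)
  fix e :: real assume e: "e > 0"
  have p0: "p > 0" using p by simp
  have "Wp p a c - Wp p a b - e \<le> Wp p b c"
  proof (rule Wp_greatest[OF b c p0])
    fix \<pi>2 assume \<pi>2: "\<pi>2 \<in> couplings b c"
    have "Wp p a c - transport_cost p \<pi>2 powr (1/p) - e \<le> Wp p a b"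
    proof (rule Wp_greatest[OF a b p0])
      fix \<pi>1 assume \<pi>1: "\<pi>1 \<in> couplings a b"
      then obtain \<gamma> where \<gamma>: "\<gamma> \<in> couplings a c"
        "transport_cost p \<gamma> powr (1/p) \<le> transport_cost p \<pi>1 powr (1/p) + transport_cost p \<pi>2 powr (1/p) + e"
        using exists_coupling_transport_cost_le[OF a b c p \<pi>1 \<pi>2 e] by blast
      then show "Wp p a c - transport_cost p \<pi>2 powr (1/p) - e \<le> transport_cost p \<pi>1 powr (1/p)"
        using Wp_le_transport_cost[OF a c p0 \<gamma>(1)] by simp
    qed
    then show "Wp p a c - Wp p a b - e \<le> transport_cost p \<pi>2 powr (1/p)" by simp
  qed
  then show "Wp p a c \<le> Wp p a b + Wp p b c + e" by simp
qed

section \<open>Busemann functions and co-rays\<close>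

lemma tendsto_INF_at_top_antimono:
  fixes f :: "real \<Rightarrow> real"
  assumes antimono: "\<And>s t. a \<le> t \<Longrightarrow> t \<le> s \<Longrightarrow> f s \<le> f t"
    and bounded: "\<And>t. a \<le> t \<Longrightarrow> B \<le> f t"
  shows "(f \<longlongrightarrow> (INF t\<in>{a..}. f t)) at_top"
proof -
  have bdd: "bdd_below (f ` {a..})" using bounded by (intro bdd_belowI[of _ B]) auto
  show ?thesis
  proof (rule order_tendstoI)
    fix y assume "y < (INF t\<in>{a..}. f t)"
    then show "\<forall>\<^sub>F t in at_top. y < f t"
      using cINF_lower[OF bdd] by (intro eventually_at_top_linorderI[of a]) (auto intro: less_le_trans)
  next
    fix y assume "(INF t\<in>{a..}. f t) < y"
    then obtain t0 where "a \<le> t0" "f t0 < y"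
      using cINF_less_iff[OF _ bdd] by auto
    then show "\<forall>\<^sub>F t in at_top. f t < y"
      using antimono by (intro eventually_at_top_linorderI[of t0]) (auto intro: le_less_trans)
  qed
qed

lemma tendsto_busemann:
  fixes g :: "real \<Rightarrow> 'a::{metric_space, second_countable_topology} measure"
  assumes g: "\<And>t. t \<ge> 0 \<Longrightarrow> g t \<in> Pp p"
    and g_dist: "\<And>s t. s \<ge> 0 \<Longrightarrow> t \<ge> 0 \<Longrightarrow> Wp p (g s) (g t) = \<bar>s - t\<bar>"
    and \<rho>: "\<rho> \<in> Pp p" and p: "p \<ge> 1"
  shows "((\<lambda>t. Wp p \<rho> (g t) - t) \<longlongrightarrow> busemann p g \<rho>) at_top"
proof -
  have "((\<lambda>t. Wp p \<rho> (g t) - t) \<longlongrightarrow> (INF t\<in>{0..}. Wp p \<rho> (g t) - t)) at_top"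
  proof (rule tendsto_INF_at_top_antimono)
    fix s t :: real assume "0 \<le> t" "t \<le> s"
    then show "Wp p \<rho> (g s) - s \<le> Wp p \<rho> (g t) - t"
      using Wp_triangle[OF \<rho> g g p, of t s] g_dist[of t s] by simp
  next
    fix t :: real assume "0 \<le> t"
    then show "- Wp p (g 0) \<rho> \<le> Wp p \<rho> (g t) - t"
      using Wp_triangle[OF g \<rho> g p, of 0 t] g_dist[of 0 t] by simp
  qed
  moreover from this have "busemann p g \<rho> = (INF t\<in>{0..}. Wp p \<rho> (g t) - t)"
    unfolding busemann_def by (rule tendsto_Lim[rotated]) simp
  ultimately show ?thesis by simp
qed

lemma busemann_le_Wp_add:
  fixes g :: "real \<Rightarrow> 'a::{metric_space, second_countable_topology} measure"
  assumes g: "\<And>t. t \<ge> 0 \<Longrightarrow> g t \<in> Pp p"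
    and g_dist: "\<And>s t. s \<ge> 0 \<Longrightarrow> t \<ge> 0 \<Longrightarrow> Wp p (g s) (g t) = \<bar>s - t\<bar>"
    and \<rho>: "\<rho> \<in> Pp p" and \<sigma>: "\<sigma> \<in> Pp p" and p: "p \<ge> 1"
  shows "busemann p g \<rho> \<le> Wp p \<rho> \<sigma> + busemann p g \<sigma>"
proof (rule tendsto_le[OF trivial_limit_at_top_linorder])
  show "((\<lambda>t. Wp p \<rho> (g t) - t) \<longlongrightarrow> busemann p g \<rho>) at_top"
    by (rule tendsto_busemann[OF g g_dist \<rho> p])
  show "((\<lambda>t. Wp p \<rho> \<sigma> + (Wp p \<sigma> (g t) - t)) \<longlongrightarrow> Wp p \<rho> \<sigma> + busemann p g \<sigma>) at_top"
    by (intro tendsto_add tendsto_const tendsto_busemann[OF g g_dist \<sigma> p])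
  show "\<forall>\<^sub>F t in at_top. Wp p \<rho> (g t) - t \<le> Wp p \<rho> \<sigma> + (Wp p \<sigma> (g t) - t)"
    using Wp_triangle[OF \<rho> \<sigma> g p] by (intro eventually_at_top_linorderI[of 0]) simp
qed

lemma is_rayD:
  assumes "is_ray p \<nu>"
  shows "\<And>t. t \<ge> 0 \<Longrightarrow> \<nu> t \<in> Pp p"
    and "\<And>s t. s \<ge> 0 \<Longrightarrow> t \<ge> 0 \<Longrightarrow> Wp p (\<nu> s) (\<nu> t) = \<bar>s - t\<bar> * Wp p (\<nu> 0) (\<nu> 1)"
  using assms unfolding is_ray_def by blast+

lemma unit_rayD:
  assumes "unit_ray p \<mu>"
  shows "\<And>t. t \<ge> 0 \<Longrightarrow> \<mu> t \<in> Pp p"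
    and "\<And>s t. s \<ge> 0 \<Longrightarrow> t \<ge> 0 \<Longrightarrow> Wp p (\<mu> s) (\<mu> t) = \<bar>s - t\<bar>"
proof -
  have ray: "is_ray p \<mu>" and one: "Wp p (\<mu> 0) (\<mu> 1) = 1"
    using assms unfolding unit_ray_def by blast+
  show "\<And>t. t \<ge> 0 \<Longrightarrow> \<mu> t \<in> Pp p" by (rule is_rayD(1)[OF ray])
  show "Wp p (\<mu> s) (\<mu> t) = \<bar>s - t\<bar>" if "s \<ge> 0" "t \<ge> 0" for s t
    using is_rayD(2)[OF ray that] unfolding one by simp
qed

lemma geod_setD:
  assumes "\<gamma> \<in> geod_set p \<rho> \<sigma>"
  shows "\<gamma> 0 = \<rho>" "\<gamma> (Wp p \<rho> \<sigma>) = \<sigma>" "\<And>t. t \<in> {0..Wp p \<rho> \<sigma>} \<Longrightarrow> \<gamma> t \<in> Pp p"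
    and "\<And>s t. s \<in> {0..Wp p \<rho> \<sigma>} \<Longrightarrow> t \<in> {0..Wp p \<rho> \<sigma>} \<Longrightarrow> Wp p (\<gamma> s) (\<gamma> t) = \<bar>s - t\<bar>"
  using assms unfolding geod_set_def mem_Collect_eq by blast+

lemma is_corayE:
  assumes "is_coray p \<nu> \<mu>"
  obtains tn \<nu>0n \<nu>n where "filterlim tn at_top sequentially" "\<And>n. \<nu>0n n \<in> Pp p"
    "(\<lambda>n. Wp p (\<nu>0n n) (\<nu> 0)) \<longlonglongrightarrow> 0" "\<And>n. \<nu>n n \<in> geod_set p (\<nu>0n n) (\<mu> (tn n))"
    "\<And>t. t \<ge> 0 \<Longrightarrow> (\<lambda>n. Wp p (\<nu>n n t) (\<nu> t)) \<longlonglongrightarrow> 0"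
  using assms unfolding is_coray_def by blast

lemma filterlim_Wp_ray_at_top:
  fixes \<mu> :: "real \<Rightarrow> 'a::{metric_space, second_countable_topology} measure"
  assumes \<mu>: "unit_ray p \<mu>" and p: "p \<ge> 1"
    and tn: "filterlim tn at_top sequentially"
    and \<rho>: "\<rho> \<in> Pp p" and \<rho>n: "\<And>n. \<rho>n n \<in> Pp p" and lim: "(\<lambda>n. Wp p (\<rho>n n) \<rho>) \<longlonglongrightarrow> 0"
  shows "filterlim (\<lambda>n. Wp p (\<rho>n n) (\<mu> (tn n))) at_top sequentially"
proof (rule filterlim_at_top_mono)
  show "LIM n sequentially. - Wp p (\<mu> 0) \<rho> - Wp p (\<rho>n n) \<rho> + tn n :> at_top"
    by (rule filterlim_tendsto_add_at_top[OF tendsto_diff[OF tendsto_const lim] tn])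
  have "\<forall>\<^sub>F n in sequentially. tn n \<ge> 0" using tn by (simp add: filterlim_at_top)
  then show "\<forall>\<^sub>F n in sequentially. - Wp p (\<mu> 0) \<rho> - Wp p (\<rho>n n) \<rho> + tn n \<le> Wp p (\<rho>n n) (\<mu> (tn n))"
  proof eventually_elim
    case (elim n)
    have \<mu>0: "\<mu> 0 \<in> Pp p" and \<mu>t: "\<mu> (tn n) \<in> Pp p" using unit_rayD(1)[OF \<mu>] elim by auto
    have "tn n = Wp p (\<mu> 0) (\<mu> (tn n))" using unit_rayD(2)[OF \<mu>, of 0 "tn n"] elim by simp
    also have "\<dots> \<le> Wp p (\<mu> 0) \<rho> + Wp p \<rho> (\<mu> (tn n))" by (rule Wp_triangle[OF \<mu>0 \<rho> \<mu>t p])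
    also have "Wp p \<rho> (\<mu> (tn n)) \<le> Wp p \<rho> (\<rho>n n) + Wp p (\<rho>n n) (\<mu> (tn n))"
      by (rule Wp_triangle[OF \<rho> \<rho>n \<mu>t p])
    also have "Wp p \<rho> (\<rho>n n) = Wp p (\<rho>n n) \<rho>" using Wp_commute[OF \<rho> \<rho>n] p by simp
    finally show ?case by simp
  qed
qed

lemma coray_speed_le_one:
  fixes \<mu> \<nu> :: "real \<Rightarrow> 'a::{metric_space, second_countable_topology} measure"
  assumes p: "p \<ge> 1" and \<mu>: "unit_ray p \<mu>" and \<nu>: "is_coray p \<nu> \<mu>"
  shows "Wp p (\<nu> 0) (\<nu> 1) \<le> 1"
proof -
  obtain tn \<nu>0n \<nu>n where tn: "filterlim tn at_top sequentially" and \<nu>0n: "\<And>n. \<nu>0n n \<in> Pp p"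
    and start: "(\<lambda>n. Wp p (\<nu>0n n) (\<nu> 0)) \<longlonglongrightarrow> 0"
    and geod: "\<And>n. \<nu>n n \<in> geod_set p (\<nu>0n n) (\<mu> (tn n))"
    and conv: "\<And>t. t \<ge> 0 \<Longrightarrow> (\<lambda>n. Wp p (\<nu>n n t) (\<nu> t)) \<longlonglongrightarrow> 0"
    using is_corayE[OF \<nu>] by blast
  have \<nu>P: "\<And>t. t \<ge> 0 \<Longrightarrow> \<nu> t \<in> Pp p"
    using \<nu> unfolding is_coray_def by (blast dest: is_rayD(1))
  have "\<forall>\<^sub>F n in sequentially. 1 \<le> Wp p (\<nu>0n n) (\<mu> (tn n))"
    using filterlim_Wp_ray_at_top[OF \<mu> p tn \<nu>P[of 0] \<nu>0n start] by (simp add: filterlim_at_top)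
  then have "\<forall>\<^sub>F n in sequentially. Wp p (\<nu> 0) (\<nu> 1) \<le> Wp p (\<nu>0n n) (\<nu> 0) + 1 + Wp p (\<nu>n n 1) (\<nu> 1)"
  proof eventually_elim
    case (elim n)
    note \<gamma> = geod_setD[OF geod[of n]]
    have \<gamma>1: "\<nu>n n 1 \<in> Pp p" using \<gamma>(3) elim by simp
    have "Wp p (\<nu> 0) (\<nu> 1) \<le> Wp p (\<nu> 0) (\<nu>0n n) + Wp p (\<nu>0n n) (\<nu> 1)"
      using Wp_triangle[OF \<nu>P \<nu>0n \<nu>P p] by simp
    also have "Wp p (\<nu>0n n) (\<nu> 1) \<le> Wp p (\<nu>0n n) (\<nu>n n 1) + Wp p (\<nu>n n 1) (\<nu> 1)"
      using Wp_triangle[OF \<nu>0n \<gamma>1 \<nu>P p] by simp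
    also have "Wp p (\<nu>0n n) (\<nu>n n 1) = 1"
      using \<gamma>(4)[of 0 1] \<gamma>(1) elim by simp
    also have "Wp p (\<nu> 0) (\<nu>0n n) = Wp p (\<nu>0n n) (\<nu> 0)"
      using Wp_commute[OF \<nu>P \<nu>0n] p by simp
    finally show ?case by simp
  qed
  moreover have "(\<lambda>n. Wp p (\<nu>0n n) (\<nu> 0) + 1 + Wp p (\<nu>n n 1) (\<nu> 1)) \<longlonglongrightarrow> 0 + 1 + 0"
    by (intro tendsto_add start tendsto_const conv) simp
  ultimately show ?thesis
    using tendsto_lowerbound by fastforce
qed

lemma busemann_coray_le:
  fixes \<mu> \<nu> :: "real \<Rightarrow> 'a::{metric_space, second_countable_topology} measure"
  assumes p: "p \<ge> 1" and \<mu>: "unit_ray p \<mu>" and \<nu>: "is_coray p \<nu> \<mu>" and t: "t \<ge> 0"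
  shows "busemann p \<mu> (\<nu> t) \<le> busemann p \<mu> (\<nu> 0) - t"
proof -
  obtain tn \<nu>0n \<nu>n where tn: "filterlim tn at_top sequentially" and \<nu>0n: "\<And>n. \<nu>0n n \<in> Pp p"
    and start: "(\<lambda>n. Wp p (\<nu>0n n) (\<nu> 0)) \<longlonglongrightarrow> 0"
    and geod: "\<And>n. \<nu>n n \<in> geod_set p (\<nu>0n n) (\<mu> (tn n))"
    and conv: "\<And>t. t \<ge> 0 \<Longrightarrow> (\<lambda>n. Wp p (\<nu>n n t) (\<nu> t)) \<longlonglongrightarrow> 0"
    using is_corayE[OF \<nu>] by blast
  have \<nu>P: "\<And>t. t \<ge> 0 \<Longrightarrow> \<nu> t \<in> Pp p"
    using \<nu> unfolding is_coray_def by (blast dest: is_rayD(1))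
  note \<mu>P = unit_rayD(1)[OF \<mu>]
  have B: "(\<lambda>n. Wp p \<rho> (\<mu> (tn n)) - tn n) \<longlonglongrightarrow> busemann p \<mu> \<rho>" if "\<rho> \<in> Pp p" for \<rho>
    using filterlim_compose[OF tendsto_busemann[OF unit_rayD[OF \<mu>] that p] tn] .
  have "\<forall>\<^sub>F n in sequentially. t \<le> Wp p (\<nu>0n n) (\<mu> (tn n))"
    using filterlim_Wp_ray_at_top[OF \<mu> p tn \<nu>P[of 0] \<nu>0n start] by (simp add: filterlim_at_top)
  moreover have "\<forall>\<^sub>F n in sequentially. 0 \<le> tn n"
    using tn by (simp add: filterlim_at_top)
  ultimately have "\<forall>\<^sub>F n in sequentially. Wp p (\<nu> t) (\<mu> (tn n)) - tn n
      \<le> Wp p (\<nu>n n t) (\<nu> t) + Wp p (\<nu>0n n) (\<nu> 0) + (Wp p (\<nu> 0) (\<mu> (tn n)) - tn n) - t"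
  proof eventually_elim
    case (elim n)
    note \<gamma> = geod_setD[OF geod[of n]]
    have \<gamma>t: "\<nu>n n t \<in> Pp p" using \<gamma>(3) elim t by simp
    have \<mu>t: "\<mu> (tn n) \<in> Pp p" using \<mu>P elim by simp
    have "Wp p (\<nu> t) (\<mu> (tn n)) \<le> Wp p (\<nu> t) (\<nu>n n t) + Wp p (\<nu>n n t) (\<mu> (tn n))"
      by (rule Wp_triangle[OF \<nu>P[OF t] \<gamma>t \<mu>t p])
    also have "Wp p (\<nu> t) (\<nu>n n t) = Wp p (\<nu>n n t) (\<nu> t)"
      using Wp_commute[OF \<nu>P[OF t] \<gamma>t] p by simp
    also have "Wp p (\<nu>n n t) (\<mu> (tn n)) = Wp p (\<nu>0n n) (\<mu> (tn n)) - t"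
      using \<gamma>(4)[of t "Wp p (\<nu>0n n) (\<mu> (tn n))"] \<gamma>(2) elim t by simp
    also have "Wp p (\<nu>0n n) (\<mu> (tn n)) \<le> Wp p (\<nu>0n n) (\<nu> 0) + Wp p (\<nu> 0) (\<mu> (tn n))"
      by (rule Wp_triangle[OF \<nu>0n \<nu>P \<mu>t p]) simp
    finally show ?case by simp
  qed
  moreover have "(\<lambda>n. Wp p (\<nu>n n t) (\<nu> t) + Wp p (\<nu>0n n) (\<nu> 0) + (Wp p (\<nu> 0) (\<mu> (tn n)) - tn n) - t)
      \<longlonglongrightarrow> 0 + 0 + busemann p \<mu> (\<nu> 0) - t"
    by (intro tendsto_diff tendsto_add conv[OF t] start B \<nu>P tendsto_const) simp
  ultimately show ?thesis
    using tendsto_le[OF trivial_limit_sequentially _ B[OF \<nu>P[OF t]]] by simp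
qed

lemma busemann_along_coray:
  fixes \<mu> \<nu> :: "real \<Rightarrow> 'a::{metric_space, second_countable_topology} measure"
  assumes p: "p \<ge> 1" and \<mu>: "unit_ray p \<mu>" and \<nu>: "is_coray p \<nu> \<mu>" and t: "t \<ge> 0"
  shows "busemann p \<mu> (\<nu> t) = busemann p \<mu> (\<nu> 0) - t"
proof -
  have ray: "is_ray p \<nu>" using \<nu> unfolding is_coray_def by blast
  have "busemann p \<mu> (\<nu> 0) \<le> Wp p (\<nu> 0) (\<nu> t) + busemann p \<mu> (\<nu> t)"
    using busemann_le_Wp_add[OF unit_rayD[OF \<mu>] is_rayD(1)[OF ray] is_rayD(1)[OF ray] p] t by simp
  also have "Wp p (\<nu> 0) (\<nu> t) \<le> t"
    using is_rayD(2)[OF ray, of 0 t] coray_speed_le_one[OF p \<mu> \<nu>] t by (simp add: mult_left_le)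
  finally show ?thesis using busemann_coray_le[OF p \<mu> \<nu> t] by simp
qed

lemma coray_unit_speed:
  fixes \<mu> \<nu> :: "real \<Rightarrow> 'a::{metric_space, second_countable_topology} measure"
  assumes p: "p \<ge> 1" and \<mu>: "unit_ray p \<mu>" and \<nu>: "is_coray p \<nu> \<mu>" and "s \<ge> 0" "t \<ge> 0"
  shows "Wp p (\<nu> s) (\<nu> t) = \<bar>s - t\<bar>"
proof -
  have ray: "is_ray p \<nu>" using \<nu> unfolding is_coray_def by blast
  have "busemann p \<mu> (\<nu> 0) \<le> Wp p (\<nu> 0) (\<nu> 1) + busemann p \<mu> (\<nu> 1)"
    using busemann_le_Wp_add[OF unit_rayD[OF \<mu>] is_rayD(1)[OF ray] is_rayD(1)[OF ray] p] by simp
  then have "Wp p (\<nu> 0) (\<nu> 1) = 1"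
    using busemann_along_coray[OF p \<mu> \<nu>, of 1] coray_speed_le_one[OF p \<mu> \<nu>] by simp
  with is_rayD(2)[OF ray assms(4,5)] show ?thesis by simp
qed

lemma busemann_le_coray_busemann:
  fixes \<mu> \<nu> :: "real \<Rightarrow> 'a::{metric_space, second_countable_topology} measure"
  assumes p: "p \<ge> 1" and \<mu>: "unit_ray p \<mu>" and \<nu>: "is_coray p \<nu> \<mu>" and \<rho>: "\<rho> \<in> Pp p"
  shows "busemann p \<mu> \<rho> \<le> busemann p \<nu> \<rho> + busemann p \<mu> (\<nu> 0)"
proof (rule tendsto_le[OF trivial_limit_at_top_linorder])
  have ray: "is_ray p \<nu>" using \<nu> unfolding is_coray_def by blast
  show "((\<lambda>t. (Wp p \<rho> (\<nu> t) - t) + busemann p \<mu> (\<nu> 0)) \<longlongrightarrow> busemann p \<nu> \<rho> + busemann p \<mu> (\<nu> 0)) at_top"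
    by (intro tendsto_add tendsto_const tendsto_busemann[OF is_rayD(1)[OF ray] coray_unit_speed[OF p \<mu> \<nu>] \<rho> p])
  show "\<forall>\<^sub>F t in at_top. busemann p \<mu> \<rho> \<le> (Wp p \<rho> (\<nu> t) - t) + busemann p \<mu> (\<nu> 0)"
  proof (intro eventually_at_top_linorderI[of 0])
    fix t :: real assume t: "t \<ge> 0"
    have "busemann p \<mu> \<rho> \<le> Wp p \<rho> (\<nu> t) + busemann p \<mu> (\<nu> t)"
      by (rule busemann_le_Wp_add[OF unit_rayD[OF \<mu>] \<rho> is_rayD(1)[OF ray t] p])
    then show "busemann p \<mu> \<rho> \<le> (Wp p \<rho> (\<nu> t) - t) + busemann p \<mu> (\<nu> 0)"
      using busemann_along_coray[OF p \<mu> \<nu> t] by simp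
  qed
qed simp

theorem proposition5p4:
  fixes p :: real
    and \<mu> \<nu> :: "real \<Rightarrow> 'a::{metric_space, complete_space, second_countable_topology} measure"
  assumes "length_space TYPE('a)"
    and "locally_compact_space (euclidean :: 'a topology)"
    and "\<not> compact (UNIV :: 'a set)"
    and "p > 1"
    and "unit_ray p \<mu>"
    and "is_coray p \<nu> \<mu>"
  shows "(\<forall>t1\<ge>0. \<forall>t2\<ge>0. busemann p \<mu> (\<nu> t1) - busemann p \<mu> (\<nu> t2) = t2 - t1) \<and>
         (\<forall>\<rho>\<in>Pp p. busemann p \<mu> \<rho> \<le> busemann p \<nu> \<rho> + busemann p \<mu> (\<nu> 0))"
proof -
  have p: "p \<ge> 1" using \<open>p > 1\<close> by simp
  note along = busemann_along_coray[OF p \<open>unit_ray p \<mu>\<close> \<open>is_coray p \<nu> \<mu>\<close>]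
  have "busemann p \<mu> (\<nu> t1) - busemann p \<mu> (\<nu> t2) = t2 - t1" if "t1 \<ge> 0" "t2 \<ge> 0" for t1 t2
    using along[OF that(1)] along[OF that(2)] by simp
  then show ?thesis
    using busemann_le_coray_busemann[OF p \<open>unit_ray p \<mu>\<close> \<open>is_coray p \<nu> \<mu>\<close>] by blast
qed

end
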